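(* Let $n\ge 1$ be an integer and let $U_{6n}=\langle a,b : a^{2n}=b^3=1,\ a^{-1}ba=b^{-1}\rangle$ (a group of order $6n$). Let $\Gamma_{U_{6n}}$ be its non-commuting graph. Then the spectrum of the distance signless Laplacian matrix $D^Q(\Gamma_{U_{6n}})$ (eigenvalues counted with multiplicity, multiplicities being added if two of the listed values coincide) consists of: (a) $6n-4$ with multiplicity $3(n-1)$; (b) $7n-4$ with multiplicity $2n+1$; (c) $8n-4$ with multiplicity $1$; (d) $13n-4$ with multiplicity $1$.
   Context: For a finite non-abelian group $G$ with centre $Z(G)$, the non-commuting graph $\Gamma_G$ is the simple undirected graph with vertex set $G\setminus Z(G)$, in which two distinct vertices $u,v$ are adjacent if and only if $uv\ne vu$. For a connected graph $H$, $d_{uv}$ denotes the length of a shortest path between $u$ and $v$; the distance matrix $D(H)$ has $(u,v)$-entry $d_{uv}$. The transmission of a vertex $v$ is $\sum_{u} d_{uv}$, and $Tr(H)$ is the diagonal matrix of vertex transmissions. The distance signless Laplacian matrix is $D^Q(H)=Tr(H)+D(H)$. *)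

theory Defs
  imports "HOL-Algebra.Group" "Jordan_Normal_Form.Char_Poly" "HOL-Library.Product_Lexorder"
begin

text \<open>Concrete model: the pair (i,j) with 0 <= i < 2n, 0 <= j < 3 stands for a^i b^j.
  Since b^j a^k = a^k b^(j (-1)^k), we get
  (a^i b^j)(a^k b^l) = a^(i+k) b^(j (-1)^k + l), and -j = 2j mod 3.\<close>

definition U6n :: "nat \<Rightarrow> (nat \<times> nat) monoid" where
  "U6n n = \<lparr> carrier = {0..<2*n} \<times> {0..<3},
             mult = (\<lambda>(i,j) (k,l). ((i + k) mod (2*n),
                                    ((if even k then j else 2*j) + l) mod 3)),
             one = (0, 0) \<rparr>"

definition group_center :: "('a, 'b) monoid_scheme \<Rightarrow> 'a set" where
  "group_center G = {z \<in> carrier G. \<forall>g \<in> carrier G. z \<otimes>\<^bsub>G\<^esub> g = g \<otimes>\<^bsub>G\<^esub> z}"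

definition nc_vertices :: "('a, 'b) monoid_scheme \<Rightarrow> 'a set" where
  "nc_vertices G = carrier G - group_center G"

definition nc_adj :: "('a, 'b) monoid_scheme \<Rightarrow> 'a \<Rightarrow> 'a \<Rightarrow> bool" where
  "nc_adj G u v \<longleftrightarrow> u \<in> nc_vertices G \<and> v \<in> nc_vertices G \<and> u \<noteq> v \<and>
                     u \<otimes>\<^bsub>G\<^esub> v \<noteq> v \<otimes>\<^bsub>G\<^esub> u"

definition is_walk :: "('a \<Rightarrow> 'a \<Rightarrow> bool) \<Rightarrow> 'a list \<Rightarrow> bool" where
  "is_walk E xs \<longleftrightarrow> xs \<noteq> [] \<and> (\<forall>i. Suc i < length xs \<longrightarrow> E (xs ! i) (xs ! Suc i))"

text \<open>Length of a shortest path (= shortest walk) from u to v; meaningful for connected graphs.\<close>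
definition graph_dist :: "('a \<Rightarrow> 'a \<Rightarrow> bool) \<Rightarrow> 'a \<Rightarrow> 'a \<Rightarrow> nat" where
  "graph_dist E u v = (LEAST k. \<exists>xs. is_walk E xs \<and> hd xs = u \<and> last xs = v \<and> length xs = Suc k)"

definition transmission :: "'a set \<Rightarrow> ('a \<Rightarrow> 'a \<Rightarrow> bool) \<Rightarrow> 'a \<Rightarrow> nat" where
  "transmission V E v = (\<Sum>u\<in>V. graph_dist E u v)"

definition dist_signless_laplacian :: "'a set \<Rightarrow> ('a \<Rightarrow> 'a \<Rightarrow> bool) \<Rightarrow> 'a \<Rightarrow> 'a \<Rightarrow> real" where
  "dist_signless_laplacian V E u v =
     (if u = v then real (transmission V E v) else 0) + real (graph_dist E u v)"

text \<open>The matrix w.r.t. an enumeration of the (finite, linearly ordered) vertex set.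
  The characteristic polynomial does not depend on the chosen enumeration.\<close>
definition DQ_matrix :: "'a::linorder set \<Rightarrow> ('a \<Rightarrow> 'a \<Rightarrow> bool) \<Rightarrow> real mat" where
  "DQ_matrix V E = (let vs = sorted_list_of_set V in
     mat (length vs) (length vs) (\<lambda>(i, j). dist_signless_laplacian V E (vs ! i) (vs ! j)))"

end

theory Submission
  imports Defs
begin

(* The centre of U_6n consists of the a^i with i even, and two non-central elements commute
   iff they lie in the same one of four classes: the a^i b^j with i even (j = 1, 2), and, for
   each j = 0, 1, 2, the a^i b^j with i odd.  So the non-commuting graph is complete
   multipartite with parts of sizes 2n, n, n, n; distances are 1 between parts and 2 inside
   a part, and D^Q(x, w) = [x = w] (5n + s - 4) + 1 + [x, w in the same part], where s is the
   size of the part of x.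
   Such a matrix has an explicit eigenbasis: for each vertex y other than a fixed
   representative r of its part, e_y - e_r with eigenvalue 5n + s - 4 (this gives 7n - 4 and
   6n - 4), together with the lifts of the four eigenvectors of the 4 x 4 quotient matrix,
   with eigenvalues 13n - 4, 8n - 4, 7n - 4, 7n - 4.  An explicit inverse of this basis makes
   D^Q similar to a diagonal matrix. *)

section \<open>Matrices indexed by a finite ordered set\<close>

definition set_mat :: "'a::linorder set \<Rightarrow> ('a \<Rightarrow> 'a \<Rightarrow> 'b) \<Rightarrow> 'b mat" where
  "set_mat V f = (let vs = sorted_list_of_set V in
     mat (length vs) (length vs) (\<lambda>(i, j). f (vs ! i) (vs ! j)))"

lemma DQ_matrix_eq_set_mat: "DQ_matrix V E = set_mat V (dist_signless_laplacian V E)"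
  by (simp add: DQ_matrix_def set_mat_def)

lemma set_mat_carrier: "set_mat V f \<in> carrier_mat (card V) (card V)"
  by (simp add: set_mat_def Let_def)

lemma sorted_list_of_set_nth_mem:
  "finite V \<Longrightarrow> i < card V \<Longrightarrow> sorted_list_of_set V ! i \<in> V"
  by (metis length_sorted_list_of_set nth_mem set_sorted_list_of_set)

lemma set_mat_cong:
  assumes "finite V" and "\<And>x y. x \<in> V \<Longrightarrow> y \<in> V \<Longrightarrow> f x y = g x y"
  shows "set_mat V f = set_mat V g"
  using assms by (intro eq_matI) (auto simp: set_mat_def Let_def sorted_list_of_set_nth_mem)

lemma set_mat_mult:
  fixes f g :: "'a::linorder \<Rightarrow> 'a \<Rightarrow> 'b::comm_ring_1"
  assumes "finite V"
  shows "set_mat V f * set_mat V g = set_mat V (\<lambda>x y. \<Sum>w\<in>V. f x w * g w y)"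
proof -
  define vs where "vs = sorted_list_of_set V"
  have reindex: "(\<Sum>w\<in>V. h w) = (\<Sum>k = 0..<length vs. h (vs ! k))" for h :: "'a \<Rightarrow> 'b"
  proof -
    have "distinct vs" "set vs = V" using assms by (simp_all add: vs_def)
    then have "(\<Sum>w\<in>V. h w) = sum_list (map h vs)"
      using sum.distinct_set_conv_list by metis
    then show ?thesis
      by (simp add: sum.list_conv_set_nth)
  qed
  show ?thesis
    unfolding set_mat_def Let_def vs_def[symmetric]
    by (rule eq_matI) (simp_all add: scalar_prod_def reindex)
qed

lemma set_mat_id: "finite V \<Longrightarrow> set_mat V (\<lambda>x y. of_bool (x = y)) = 1\<^sub>m (card V)"
  by (rule eq_matI) (auto simp: set_mat_def Let_def nth_eq_iff_index_eq)

lemma char_poly_set_mat_eigenbasis: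
  fixes M P Q :: "'a::linorder \<Rightarrow> 'a \<Rightarrow> 'b::field" and ev :: "'a \<Rightarrow> 'b"
  assumes V: "finite V"
    and left_inverse: "\<And>x y. x \<in> V \<Longrightarrow> y \<in> V \<Longrightarrow>
      (\<Sum>w\<in>V. Q x w * P w y) = of_bool (x = y)"
    and eigen: "\<And>x y. x \<in> V \<Longrightarrow> y \<in> V \<Longrightarrow> (\<Sum>w\<in>V. M x w * P w y) = P x y * ev y"
  shows "char_poly (set_mat V M) = (\<Prod>x\<in>V. [:- ev x, 1:])"
proof -
  let ?N = "card V" and ?T = "set_mat V (\<lambda>x y. if x = y then ev y else 0)"
  have car: "set_mat V f \<in> carrier_mat ?N ?N" for f :: "'a \<Rightarrow> 'a \<Rightarrow> 'b"
    by (rule set_mat_carrier)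
  have "set_mat V Q * set_mat V P = set_mat V (\<lambda>x y. of_bool (x = y))"
    unfolding set_mat_mult[OF V] using V left_inverse by (rule set_mat_cong)
  then have QP: "set_mat V Q * set_mat V P = 1\<^sub>m ?N"
    by (simp add: set_mat_id V)
  then have PQ: "set_mat V P * set_mat V Q = 1\<^sub>m ?N"
    by (rule mat_mult_left_right_inverse[OF car car])
  have MP: "set_mat V M * set_mat V P = set_mat V P * ?T"
    unfolding set_mat_mult[OF V] using V
    by (rule set_mat_cong) (simp add: V eigen if_distrib[of "(*) _"] cong: if_cong)
  have "set_mat V M = set_mat V M * (set_mat V P * set_mat V Q)"
    by (simp add: PQ right_mult_one_mat[OF car])
  also have "\<dots> = set_mat V P * ?T * set_mat V Q"
    by (simp add: assoc_mult_mat[OF car car car, symmetric] MP)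
  finally have "set_mat V M = set_mat V P * ?T * set_mat V Q" .
  from similar_matI[OF _ PQ QP this] have "similar_mat (set_mat V M) ?T"
    by (simp add: set_mat_carrier)
  then have "char_poly (set_mat V M) = char_poly ?T"
    by (rule char_poly_similar)
  also have "\<dots> = (\<Prod>a\<leftarrow>diag_mat ?T. [:- a, 1:])"
    using V by (intro char_poly_upper_triangular[OF car])
      (auto simp: upper_triangular_def set_mat_def Let_def nth_eq_iff_index_eq)
  also have "diag_mat ?T = map ev (sorted_list_of_set V)"
    by (rule nth_equalityI) (auto simp: diag_mat_def set_mat_def Let_def)
  finally show ?thesis
    using V by (simp add: prod.distinct_set_conv_list[symmetric])
qed

section \<open>Diagonal plus block-constant matrices\<close>

locale partition_with_reps =
  fixes V :: "'a set" and part :: "'a \<Rightarrow> nat" and k :: nat and rep :: "nat \<Rightarrow> 'a"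
  assumes finite_V: "finite V"
    and part_less: "x \<in> V \<Longrightarrow> part x < k"
    and rep_in: "p < k \<Longrightarrow> rep p \<in> V"
    and part_rep: "p < k \<Longrightarrow> part (rep p) = p"
begin

abbreviation part_size :: "nat \<Rightarrow> nat" where
  "part_size p \<equiv> card {x \<in> V. part x = p}"

definition is_rep :: "'a \<Rightarrow> bool" where
  "is_rep x \<longleftrightarrow> x = rep (part x)"

lemma ex_other_part:
  assumes "1 < k" "x \<in> V"
  shows "\<exists>w\<in>V. part w \<noteq> part x"
proof
  let ?q = "if part x = 0 then 1 else 0"
  show "rep ?q \<in> V" "part (rep ?q) \<noteq> part x"
    using assms rep_in part_rep by auto
qed

lemma part_size_pos: "p < k \<Longrightarrow> part_size p > 0"
  using finite_V rep_in part_rep by (auto simp: card_gt_0_iff)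

lemma sum_over_parts: "(\<Sum>x\<in>V. h (part x)) = (\<Sum>p<k. of_nat (part_size p) * h p)"
proof -
  have "(\<Sum>x\<in>V. h (part x)) = (\<Sum>p<k. \<Sum>x | x \<in> V \<and> part x = p. h (part x))"
    using finite_V part_less by (intro sum.group[symmetric]) auto
  then show ?thesis by simp
qed

lemma prod_over_parts:
  assumes "S \<subseteq> V"
  shows "(\<Prod>x\<in>S. h (part x)) = (\<Prod>p<k. h p ^ card {x \<in> S. part x = p})"
proof -
  have "finite S" using assms finite_V by (rule finite_subset)
  then have "(\<Prod>x\<in>S. h (part x)) = (\<Prod>p<k. \<Prod>x | x \<in> S \<and> part x = p. h (part x))"
    using assms part_less by (intro prod.group[symmetric]) auto
  then show ?thesis by simp
qed

end

locale quotient_eigenbasis = partition_with_reps V part k rep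
  for V :: "'a::linorder set" and part k rep +
  fixes d :: "nat \<Rightarrow> real" and c W W' :: "nat \<Rightarrow> nat \<Rightarrow> real" and \<mu> :: "nat \<Rightarrow> real"
  assumes W'_W: "p < k \<Longrightarrow> q < k \<Longrightarrow> (\<Sum>r<k. W' p r * W r q) = of_bool (p = q)"
    and quotient_eigen: "p < k \<Longrightarrow> q < k \<Longrightarrow>
      d p * W p q + (\<Sum>r<k. real (part_size r) * c p r * W r q) = \<mu> q * W p q"
begin

definition block_entry :: "'a \<Rightarrow> 'a \<Rightarrow> real" where
  "block_entry x w = of_bool (x = w) * d (part x) + c (part x) (part w)"

definition eigvec :: "'a \<Rightarrow> 'a \<Rightarrow> real" where
  "eigvec w y = (if is_rep y then W (part w) (part y)
     else of_bool (w = y) - of_bool (w = rep (part y)))"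

definition eigvec_inv :: "'a \<Rightarrow> 'a \<Rightarrow> real" where
  "eigvec_inv x w = (if is_rep x then W' (part x) (part w) / part_size (part w)
     else of_bool (w = x) - of_bool (part w = part x) / part_size (part x))"

definition eigval :: "'a \<Rightarrow> real" where
  "eigval y = (if is_rep y then \<mu> (part y) else d (part y))"

lemma sum_eigvec_nonrep:
  assumes "y \<in> V" "\<not> is_rep y"
  shows "(\<Sum>w\<in>V. f w * eigvec w y) = f y - f (rep (part y))"
  using assms finite_V rep_in part_less
  by (simp add: eigvec_def algebra_simps sum_subtractf of_bool_def if_distrib[of "(*) _"] cong: if_cong)

lemma eigvec_inv_eigvec:
  assumes x: "x \<in> V" and y: "y \<in> V"
  shows "(\<Sum>w\<in>V. eigvec_inv x w * eigvec w y) = of_bool (x = y)"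
proof (cases "is_rep y")
  case False
  then have "(\<Sum>w\<in>V. eigvec_inv x w * eigvec w y) = eigvec_inv x y - eigvec_inv x (rep (part y))"
    using y by (intro sum_eigvec_nonrep)
  also have "\<dots> = of_bool (x = y)"
    using False part_rep part_less x y by (auto simp: eigvec_inv_def is_rep_def)
  finally show ?thesis .
next
  case y_rep: True
  let ?W = "\<lambda>p. W p (part y)"
  have "(\<Sum>w\<in>V. eigvec_inv x w * eigvec w y) = (\<Sum>w\<in>V. eigvec_inv x w * ?W (part w))"
    using y_rep by (simp add: eigvec_def)
  also have "\<dots> = of_bool (x = y)"
  proof (cases "is_rep x")
    case True
    have "(\<Sum>w\<in>V. eigvec_inv x w * ?W (part w))
        = (\<Sum>w\<in>V. W' (part x) (part w) / part_size (part w) * ?W (part w))"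
      using True by (simp add: eigvec_inv_def)
    also have "\<dots> = (\<Sum>p<k. real (part_size p) * (W' (part x) p / part_size p * ?W p))"
      by (rule sum_over_parts)
    also have "\<dots> = (\<Sum>p<k. W' (part x) p * ?W p)"
      using part_size_pos by (intro sum.cong) auto
    also have "\<dots> = of_bool (part x = part y)"
      using W'_W part_less x y by simp
    also have "part x = part y \<longleftrightarrow> x = y"
      using True y_rep by (metis is_rep_def)
    finally show ?thesis .
  next
    case False
    have "(\<Sum>w\<in>V. eigvec_inv x w * ?W (part w))
        = (\<Sum>w\<in>V. of_bool (w = x) * ?W (part w))
          - (\<Sum>w\<in>V. of_bool (part w = part x) / part_size (part x) * ?W (part w))"
      using False by (simp add: eigvec_inv_def left_diff_distrib sum_subtractf)
    also have "(\<Sum>w\<in>V. of_bool (part w = part x) / part_size (part x) * ?W (part w))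
        = (\<Sum>p<k. real (part_size p) * (of_bool (p = part x) * (?W p / part_size (part x))))"
      by (subst sum_over_parts[symmetric]) simp
    also have "\<dots> = ?W (part x)"
      using x part_less part_size_pos[OF part_less[OF x]]
      by (simp add: mult.left_commute[of "real _"] sum_divide_distrib[symmetric])
    finally show ?thesis
      using False y_rep x finite_V by auto
  qed
  finally show ?thesis .
qed

lemma block_entry_eigvec:
  assumes x: "x \<in> V" and y: "y \<in> V"
  shows "(\<Sum>w\<in>V. block_entry x w * eigvec w y) = eigvec x y * eigval y"
proof (cases "is_rep y")
  case False
  then have "(\<Sum>w\<in>V. block_entry x w * eigvec w y) = block_entry x y - block_entry x (rep (part y))"
    using y by (intro sum_eigvec_nonrep)
  also have "\<dots> = eigvec x y * eigval y"
    using False part_rep part_less y by (auto simp: block_entry_def eigvec_def eigval_def)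
  finally show ?thesis .
next
  case True
  have "(\<Sum>w\<in>V. block_entry x w * eigvec w y)
      = (\<Sum>w\<in>V. of_bool (w = x) * d (part x) * W (part w) (part y))
        + (\<Sum>w\<in>V. c (part x) (part w) * W (part w) (part y))"
    using True by (simp add: block_entry_def eigvec_def distrib_right sum.distrib eq_commute)
  also have "\<dots> = d (part x) * W (part x) (part y) + (\<Sum>p<k. real (part_size p) * c (part x) p * W p (part y))"
    using x finite_V sum_over_parts[of "\<lambda>p. c (part x) p * W p (part y)"]
    by (simp add: mult.assoc)
  also have "\<dots> = eigvec x y * eigval y"
    using True quotient_eigen part_less x y by (simp add: eigvec_def eigval_def)
  finally show ?thesis .
qed

lemma prod_eigval:
  "(\<Prod>x\<in>V. [:- eigval x, 1:]) = (\<Prod>p<k. [:- \<mu> p, 1:]) * (\<Prod>p<k. [:- d p, 1:] ^ (part_size p - 1))"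
proof -
  let ?R = "rep ` {..<k}"
  have R: "?R \<subseteq> V" using rep_in by auto
  have inj: "inj_on rep {..<k}" by (metis inj_onI lessThan_iff part_rep)
  have "(\<Prod>x\<in>V. [:- eigval x, 1:]) = (\<Prod>x\<in>V - ?R. [:- eigval x, 1:]) * (\<Prod>x\<in>?R. [:- eigval x, 1:])"
    by (rule prod.subset_diff[OF R finite_V])
  also have "(\<Prod>x\<in>?R. [:- eigval x, 1:]) = (\<Prod>p<k. [:- \<mu> p, 1:])"
    using part_rep by (simp add: prod.reindex[OF inj] eigval_def is_rep_def)
  also have "(\<Prod>x\<in>V - ?R. [:- eigval x, 1:]) = (\<Prod>x\<in>V - ?R. [:- d (part x), 1:])"
    using part_less by (intro prod.cong) (auto simp: eigval_def is_rep_def)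
  also have "\<dots> = (\<Prod>p<k. [:- d p, 1:] ^ card {x \<in> V - ?R. part x = p})"
    by (rule prod_over_parts) auto
  also have "\<dots> = (\<Prod>p<k. [:- d p, 1:] ^ (part_size p - 1))"
  proof (rule prod.cong)
    fix p assume "p \<in> {..<k}"
    then have "{x \<in> V - ?R. part x = p} = {x \<in> V. part x = p} - {rep p}"
      using part_rep by auto
    then show "[:- d p, 1:] ^ card {x \<in> V - ?R. part x = p} = [:- d p, 1:] ^ (part_size p - 1)"
      using \<open>p \<in> {..<k}\<close> finite_V rep_in part_rep by simp
  qed simp
  finally show ?thesis by (simp add: mult.commute)
qed

theorem char_poly_block_entry:
  "char_poly (set_mat V block_entry) = (\<Prod>p<k. [:- \<mu> p, 1:]) * (\<Prod>p<k. [:- d p, 1:] ^ (part_size p - 1))"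
  unfolding prod_eigval[symmetric]
  by (rule char_poly_set_mat_eigenbasis[OF finite_V eigvec_inv_eigvec block_entry_eigvec])

end

section \<open>Distances in complete multipartite graphs\<close>

definition complete_multipartite :: "'a set \<Rightarrow> ('a \<Rightarrow> 'b) \<Rightarrow> 'a \<Rightarrow> 'a \<Rightarrow> bool" where
  "complete_multipartite V part u v \<longleftrightarrow> u \<in> V \<and> v \<in> V \<and> part u \<noteq> part v"

lemma graph_dist_eqI:
  assumes "is_walk E xs" "hd xs = u" "last xs = v" "length xs = Suc k"
    and "\<And>ys. is_walk E ys \<Longrightarrow> hd ys = u \<Longrightarrow> last ys = v \<Longrightarrow> Suc k \<le> length ys"
  shows "graph_dist E u v = k"
  unfolding graph_dist_def
proof (rule Least_equality)
  show "\<exists>xs. is_walk E xs \<and> hd xs = u \<and> last xs = v \<and> length xs = Suc k"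
    using assms(1-4) by blast
qed (use assms(5) in fastforce)

lemma is_walk_singleton: "is_walk E [u]"
  by (simp add: is_walk_def)

lemma is_walk_Cons: "E u v \<Longrightarrow> is_walk E (v # xs) \<Longrightarrow> is_walk E (u # v # xs)"
  by (auto simp: is_walk_def less_Suc_eq_0_disj)

lemma short_walk_adjacent:
  assumes "is_walk E xs" "length xs \<le> 2"
  shows "hd xs = last xs \<or> E (hd xs) (last xs)"
proof -
  have "xs \<noteq> []" using assms(1) by (simp add: is_walk_def)
  with assms(2) consider a where "xs = [a]" | a b where "xs = [a, b]"
    by (metis One_nat_def Suc_1 le_Suc_eq le_zero_eq length_0_conv length_Suc_conv)
  then show ?thesis
    using assms(1) by cases (auto simp: is_walk_def)
qed

lemma graph_dist_self: "graph_dist E u u = 0"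
  by (rule graph_dist_eqI[OF is_walk_singleton]) (auto simp: is_walk_def Suc_le_eq)

lemma graph_dist_adjacent:
  assumes "u \<noteq> v" "E u v"
  shows "graph_dist E u v = 1"
proof (rule graph_dist_eqI[of E "[u, v]"])
  show "is_walk E [u, v]"
    using assms(2) by (intro is_walk_Cons is_walk_singleton)
next
  fix ys assume ys: "is_walk E ys" "hd ys = u" "last ys = v"
  show "Suc 1 \<le> length ys"
  proof (rule ccontr)
    assume "\<not> Suc 1 \<le> length ys"
    moreover have "length ys > 0"
      using ys(1) by (simp add: is_walk_def)
    ultimately have "length ys = 1"
      by linarith
    then obtain a where "ys = [a]"
      by (auto simp: length_Suc_conv)
    with ys(2,3) assms(1) show False by simp
  qed
qed auto

lemma graph_dist_common_neighbour:
  assumes "u \<noteq> v" "\<not> E u v" "E u w" "E w v"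
  shows "graph_dist E u v = 2"
proof (rule graph_dist_eqI[of E "[u, w, v]"])
  show "is_walk E [u, w, v]"
    using assms(3,4) by (intro is_walk_Cons is_walk_singleton)
next
  fix ys assume "is_walk E ys" "hd ys = u" "last ys = v"
  then show "Suc 2 \<le> length ys"
    using short_walk_adjacent[of E ys] assms(1,2) by fastforce
qed auto

lemma graph_dist_complete_multipartite:
  assumes "u \<in> V" "v \<in> V" "w \<in> V" "part w \<noteq> part v"
  shows "graph_dist (complete_multipartite V part) u v =
    (if u = v then 0 else if part u = part v then 2 else 1)"
proof -
  let ?E = "complete_multipartite V part"
  have "graph_dist ?E u v = 2" if "u \<noteq> v" "part u = part v"
    using assms that by (intro graph_dist_common_neighbour[where w = w]) (auto simp: complete_multipartite_def)
  moreover have "graph_dist ?E u v = 1" if "part u \<noteq> part v"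
    using assms that by (intro graph_dist_adjacent) (auto simp: complete_multipartite_def)
  ultimately show ?thesis
    by (auto simp: graph_dist_self)
qed

lemma transmission_complete_multipartite:
  assumes V: "finite V" and v: "v \<in> V" and "w \<in> V" "part w \<noteq> part v"
  shows "transmission V (complete_multipartite V part) v = card V + card {u \<in> V. part u = part v} - 2"
proof -
  let ?P = "{u \<in> V. part u = part v}"
  have "transmission V (complete_multipartite V part) v = (\<Sum>u\<in>V. of_bool (u \<noteq> v) + of_bool (u \<in> ?P - {v}))"
    unfolding transmission_def using assms by (intro sum.cong) (auto simp: graph_dist_complete_multipartite)
  also have "\<dots> = card (V - {v}) + card (?P - {v})"
    using V by (simp add: sum.distrib; intro arg_cong2[where f = "(+)"] arg_cong[where f = card]; auto)
  also have "\<dots> = card V + card ?P - 2"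
  proof -
    have "card V > 0" "card ?P > 0"
      using V v by (auto simp: card_gt_0_iff)
    then show ?thesis
      using V v by (simp add: card_Diff_singleton)
  qed
  finally show ?thesis .
qed

lemma dist_signless_laplacian_complete_multipartite:
  assumes "finite V" "u \<in> V" "v \<in> V" "w \<in> V" "part w \<noteq> part v"
  shows "dist_signless_laplacian V (complete_multipartite V part) u v =
    of_bool (u = v) * (real (card V + card {x \<in> V. part x = part u}) - 4) + (1 + of_bool (part u = part v))"
proof -
  have "card V + card {x \<in> V. part x = part v} \<ge> 2"
    using assms card_gt_0_iff[of V] card_gt_0_iff[of "{x \<in> V. part x = part v}"] by auto
  then show ?thesis
    using assms by (auto simp: dist_signless_laplacian_def transmission_complete_multipartite
        graph_dist_complete_multipartite)
qed

section \<open>The non-commuting graph of U_6n\<close>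

lemma U6n_carrier: "carrier (U6n n) = {0..<2 * n} \<times> {0..<3}"
  by (simp add: U6n_def)

lemma U6n_mult:
  "(i, j) \<otimes>\<^bsub>U6n n\<^esub> (k, l) = ((i + k) mod (2 * n), ((if even k then j else 2 * j) + l) mod 3)"
  by (simp add: U6n_def)

lemma U6n_commute_iff:
  assumes "j < 3" "l < 3"
  shows "(i, j) \<otimes>\<^bsub>U6n n\<^esub> (k, l) = (k, l) \<otimes>\<^bsub>U6n n\<^esub> (i, j) \<longleftrightarrow>
    (if even i then even k \<or> j = 0 else if even k then l = 0 else j = l)"
proof -
  have "j = 0 \<or> j = 1 \<or> j = 2" "l = 0 \<or> l = 1 \<or> l = 2"
    using assms by auto
  then show ?thesis
    by (auto simp: U6n_mult add.commute)
qed

lemma group_center_U6n: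
  assumes "n \<ge> 1"
  shows "group_center (U6n n) = {(i, 0) | i. i < 2 * n \<and> even i}"
proof (rule Set.set_eqI, rule iffI)
  fix z assume z: "z \<in> group_center (U6n n)"
  then obtain i j where ij: "z = (i, j)" "i < 2 * n" "j < 3"
    by (auto simp: group_center_def U6n_carrier)
  have "(1, 0) \<in> carrier (U6n n)" "(0, 1) \<in> carrier (U6n n)"
    using assms by (auto simp: U6n_carrier)
  then have "z \<otimes>\<^bsub>U6n n\<^esub> (1, 0) = (1, 0) \<otimes>\<^bsub>U6n n\<^esub> z" "z \<otimes>\<^bsub>U6n n\<^esub> (0, 1) = (0, 1) \<otimes>\<^bsub>U6n n\<^esub> z"
    using z by (auto simp: group_center_def)
  then show "z \<in> {(i, 0) | i. i < 2 * n \<and> even i}"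
    using U6n_commute_iff[where i = i and j = j and k = 1 and l = 0 and n = n]
      U6n_commute_iff[where i = i and j = j and k = 0 and l = 1 and n = n] ij
    by (auto split: if_splits)
next
  fix z :: "nat \<times> nat" assume "z \<in> {(i, 0) | i. i < 2 * n \<and> even i}"
  then show "z \<in> group_center (U6n n)"
    by (auto simp: group_center_def U6n_carrier U6n_commute_iff)
qed

definition U6n_noncentral :: "nat \<Rightarrow> (nat \<times> nat) set" where
  "U6n_noncentral n = {(i, j). i < 2 * n \<and> j < 3 \<and> \<not> (even i \<and> j = 0)}"

fun U6n_part :: "nat \<times> nat \<Rightarrow> nat" where
  "U6n_part (i, j) = (if even i then 0 else Suc j)"

definition U6n_rep :: "nat \<Rightarrow> nat \<times> nat" where
  "U6n_rep p = (if p = 0 then (0, 1) else (1, p - 1))"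

lemma nc_vertices_U6n: "n \<ge> 1 \<Longrightarrow> nc_vertices (U6n n) = U6n_noncentral n"
  by (auto simp: nc_vertices_def group_center_U6n U6n_carrier U6n_noncentral_def)

lemma U6n_commute_iff_same_part:
  assumes "u \<in> U6n_noncentral n" "v \<in> U6n_noncentral n"
  shows "u \<otimes>\<^bsub>U6n n\<^esub> v = v \<otimes>\<^bsub>U6n n\<^esub> u \<longleftrightarrow> U6n_part u = U6n_part v"
  using assms by (auto simp: U6n_noncentral_def U6n_commute_iff split: if_splits)

lemma nc_adj_U6n:
  assumes "n \<ge> 1"
  shows "nc_adj (U6n n) = complete_multipartite (U6n_noncentral n) U6n_part"
proof (intro ext)
  fix u v
  show "nc_adj (U6n n) u v = complete_multipartite (U6n_noncentral n) U6n_part u v"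
    using U6n_commute_iff_same_part[of u n v]
    by (auto simp: nc_adj_def complete_multipartite_def nc_vertices_U6n[OF assms])
qed

lemma card_even_below: "card {i :: nat. i < 2 * n \<and> even i} = n"
proof -
  have "{i :: nat. i < 2 * n \<and> even i} = (\<lambda>k. 2 * k) ` {..<n}"
    by (auto elim!: evenE)
  then show ?thesis by (simp add: card_image inj_on_def)
qed

lemma card_odd_below: "card {i :: nat. i < 2 * n \<and> odd i} = n"
proof -
  have "{i :: nat. i < 2 * n \<and> odd i} = (\<lambda>k. 2 * k + 1) ` {..<n}"
    by (auto elim!: oddE)
  then show ?thesis by (simp add: card_image inj_on_def)
qed

lemma card_U6n_part:
  assumes "p < 4"
  shows "card {x \<in> U6n_noncentral n. U6n_part x = p} = (if p = 0 then 2 * n else n)"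
proof (cases p)
  case 0
  then have "{x \<in> U6n_noncentral n. U6n_part x = p} = {i. i < 2 * n \<and> even i} \<times> {1, 2}"
    by (auto simp: U6n_noncentral_def split: if_splits)
  then show ?thesis
    using 0 by (simp add: card_cartesian_product card_even_below)
next
  case (Suc j)
  then have "{x \<in> U6n_noncentral n. U6n_part x = p} = {i. i < 2 * n \<and> odd i} \<times> {j}"
    using assms by (auto simp: U6n_noncentral_def split: if_splits)
  then show ?thesis
    using Suc by (simp add: card_cartesian_product card_odd_below)
qed

lemma card_U6n_noncentral: "card (U6n_noncentral n) = 5 * n"
proof -
  let ?A = "{i. i < 2 * n \<and> even i} \<times> {1 :: nat, 2}" and ?B = "{i. i < 2 * n \<and> odd i} \<times> {0 :: nat, 1, 2}"
  have "U6n_noncentral n = ?A \<union> ?B"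
    by (auto simp: U6n_noncentral_def)
  moreover have "card (?A \<union> ?B) = card ?A + card ?B"
    by (rule card_Un_disjoint) auto
  ultimately show ?thesis
    by (simp add: card_cartesian_product card_even_below card_odd_below)
qed

lemma finite_U6n_noncentral: "finite (U6n_noncentral n)"
proof -
  have "U6n_noncentral n \<subseteq> {..<2 * n} \<times> {..<3}"
    by (auto simp: U6n_noncentral_def)
  then show ?thesis
    by (rule finite_subset) auto
qed

(* The columns are eigenvectors of the quotient matrix B p q = [p = q] (5n + 2 s_p - 4) + s_q,
   s = (2n, n, n, n), with eigenvalues U6n_quotient_eigval. *)
definition U6n_W :: "nat \<Rightarrow> nat \<Rightarrow> real" where
  "U6n_W p q = [[3, 1, 0, 0], [2, -1, 1, 1], [2, -1, -1, 0], [2, -1, 0, -1]] ! p ! q"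

definition U6n_W_inv :: "nat \<Rightarrow> nat \<Rightarrow> real" where
  "U6n_W_inv q p = [[1/5, 1/15, 1/15, 1/15], [2/5, -1/5, -1/5, -1/5],
     [0, 1/3, -2/3, 1/3], [0, 1/3, 1/3, -2/3]] ! q ! p"

definition U6n_quotient_eigval :: "nat \<Rightarrow> nat \<Rightarrow> real" where
  "U6n_quotient_eigval n q = [13 * real n - 4, 8 * real n - 4, 7 * real n - 4, 7 * real n - 4] ! q"

lemma quotient_eigenbasis_U6n:
  assumes "n \<ge> 1"
  shows "quotient_eigenbasis (U6n_noncentral n) U6n_part 4 U6n_rep
    (\<lambda>p. real (card (U6n_noncentral n) + card {x \<in> U6n_noncentral n. U6n_part x = p}) - 4)
    (\<lambda>p q. 1 + of_bool (p = q)) U6n_W U6n_W_inv (U6n_quotient_eigval n)"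
proof (intro quotient_eigenbasis.intro quotient_eigenbasis_axioms.intro)
  show "partition_with_reps (U6n_noncentral n) U6n_part 4 U6n_rep"
    using assms finite_U6n_noncentral
    by unfold_locales (auto simp: U6n_noncentral_def U6n_rep_def)
  have four: "p < 4 \<longleftrightarrow> p = 0 \<or> p = 1 \<or> p = 2 \<or> p = (3 :: nat)" for p
    by auto
  have sum4: "(\<Sum>r<4. f r) = f 0 + f 1 + f 2 + (f 3 :: real)" for f :: "nat \<Rightarrow> real"
    by (simp add: eval_nat_numeral)
  fix p q :: nat assume "p < 4" "q < 4"
  then show "(\<Sum>r<4. U6n_W_inv p r * U6n_W r q) = of_bool (p = q)"
    by (auto simp: four sum4 U6n_W_def U6n_W_inv_def)
  from \<open>p < 4\<close> \<open>q < 4\<close>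
  show "(real (card (U6n_noncentral n) + card {x \<in> U6n_noncentral n. U6n_part x = p}) - 4) * U6n_W p q
    + (\<Sum>r<4. real (card {x \<in> U6n_noncentral n. U6n_part x = r}) * (1 + of_bool (p = r)) * U6n_W r q)
    = U6n_quotient_eigval n q * U6n_W p q"
    by (auto simp: four sum4 card_U6n_part card_U6n_noncentral U6n_W_def U6n_quotient_eigval_def
        algebra_simps)
qed

lemma prod_U6n_eigenvalues:
  fixes g :: "real \<Rightarrow> 'a::comm_monoid_mult"
  assumes "n \<ge> 1"
  defines "m \<equiv> \<lambda>p :: nat. if p = 0 then 2 * n else n"
  shows "(\<Prod>p<4. g (U6n_quotient_eigval n p)) * (\<Prod>p<4. g (real (5 * n + m p) - 4) ^ (m p - 1))
    = g (6 * real n - 4) ^ (3 * (n - 1)) * g (7 * real n - 4) ^ (2 * n + 1) * g (8 * real n - 4) * g (13 * real n - 4)"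
proof -
  obtain k where k: "n = Suc k"
    using assms by (cases n) auto
  have "g (7 * real n - 4) ^ (2 * n + 1) = g (7 * real n - 4) ^ (2 * n - 1) * g (7 * real n - 4) * g (7 * real n - 4)"
    and "g (6 * real n - 4) ^ (3 * (n - 1)) = g (6 * real n - 4) ^ (n - 1) * g (6 * real n - 4) ^ (n - 1) * g (6 * real n - 4) ^ (n - 1)"
    by (simp_all add: k numeral_3_eq_3 power_add mult_ac)
  then show ?thesis
    by (simp add: eval_nat_numeral m_def U6n_quotient_eigval_def algebra_simps)
qed

theorem theorem5p3:
  fixes n :: nat
  assumes "n \<ge> 1"
  shows "char_poly (DQ_matrix (nc_vertices (U6n n)) (nc_adj (U6n n))) =
           [:- (6 * real n - 4), 1:] ^ (3 * (n - 1))
         * [:- (7 * real n - 4), 1:] ^ (2 * n + 1)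
         * [:- (8 * real n - 4), 1:]
         * [:- (13 * real n - 4), 1:]"
proof -
  let ?V = "U6n_noncentral n"
  let ?s = "\<lambda>p. card {x \<in> ?V. U6n_part x = p}"
  let ?d = "\<lambda>p. real (card ?V + ?s p) - 4"
  interpret quotient_eigenbasis ?V U6n_part 4 U6n_rep ?d "\<lambda>p q. 1 + of_bool (p = q)"
      U6n_W U6n_W_inv "U6n_quotient_eigval n"
    using assms by (rule quotient_eigenbasis_U6n)
  have DQ: "DQ_matrix (nc_vertices (U6n n)) (nc_adj (U6n n)) = set_mat ?V block_entry"
    unfolding DQ_matrix_eq_set_mat nc_vertices_U6n[OF assms] nc_adj_U6n[OF assms]
  proof (rule set_mat_cong[OF finite_V])
    fix x y assume "x \<in> ?V" "y \<in> ?V"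
    moreover obtain w where "w \<in> ?V" "U6n_part w \<noteq> U6n_part y"
      using ex_other_part[of y] \<open>y \<in> ?V\<close> by auto
    ultimately show "dist_signless_laplacian ?V (complete_multipartite ?V U6n_part) x y = block_entry x y"
      unfolding block_entry_def by (simp add: finite_V dist_signless_laplacian_complete_multipartite)
  qed
  have "char_poly (DQ_matrix (nc_vertices (U6n n)) (nc_adj (U6n n)))
      = (\<Prod>p<4. [:- U6n_quotient_eigval n p, 1:]) * (\<Prod>p<4. [:- ?d p, 1:] ^ (?s p - 1))"
    unfolding DQ by (rule char_poly_block_entry)
  also have "(\<Prod>p<4. [:- ?d p, 1:] ^ (?s p - 1))
      = (\<Prod>p :: nat<4. [:- (real (5 * n + (if p = 0 then 2 * n else n)) - 4), 1:] ^ ((if p = 0 then 2 * n else n) - 1))"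
    by (intro prod.cong) (simp_all only: lessThan_iff card_U6n_part card_U6n_noncentral)
  finally show ?thesis
    using prod_U6n_eigenvalues[OF assms, of "\<lambda>a. [:- a, 1:]"] by simp
qed

end
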